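(* Let $\mathcal{K}$ be a 2-category. The assignment sending a monad $(X,S,m,s)$ to the relative monad $(X,1_X,S)$ with unit $s$ and extension $f\mapsto mB\cdot Sf$ (for $f\colon A\Rightarrow SB$), a 1-cell $(F,\phi)$ to $(F,F,\phi)$ and a 2-cell $p$ to $(p,p)$, defines a 2-functor $\mathbf{Mnd}(\mathcal{K}^{op})^{op}\to\mathbf{Rmd}(\mathcal{K})$ which is injective on objects, whose image on objects is exactly the relative monads $(X,I,S)$ with $X_0=X$ and $I=1_X$, and which is an isomorphism on every hom-category. Thus $\mathbf{Mnd}(\mathcal{K}^{op})^{op}$ is a full, locally full sub-2-category of $\mathbf{Rmd}(\mathcal{K})$.
   Context: Conventions: 1-cells compose by juxtaposition; vertical composition of 2-cells is written $\cdot$; whiskering by juxtaposition. $\mathbf{Mnd}(\mathcal{K}^{op})^{op}$: objects are monads $(X,S,m,s)$ in $\mathcal{K}$; a 1-cell $(X,S)\to(Y,T)$ (with $T$ having multiplication $n$ and unit $t$) is a pair $(F,\phi)$ with $F\colon X\to Y$ and $\phi\colon FS\Rightarrow TF$ such that $\phi\cdot Fs=tF$ and $\phi\cdot Fm=nF\cdot T\phi\cdot\phi S$; a 2-cell $(F,\phi)\Rightarrow(F',\phi')$ is $p\colon F\Rightarrow F'$ with $\phi'\cdot pS=Tp\cdot\phi$. Operator: given 1-cells $F\colon X\to Z$, $G\colon Y\to Z$, $F'\colon X\to Z'$, $G'\colon Y\to Z'$, an operator $(-)^\#\colon[F,G]\to[F',G']$ is a family of functions, indexed by spans $A\colon O\to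 X$, $B\colon O\to Y$, $(-)^\#_{A,B}\colon\mathcal{K}[O,Z](FA,GB)\to\mathcal{K}[O,Z'](F'A,G'B)$, with $(fP)^\#=f^\#P$, $(f\cdot F\alpha)^\#=f^\#\cdot F'\alpha$, $(G\beta\cdot f)^\#=G'\beta\cdot f^\#$ for all 1-cells $P\colon O'\to O$ and 2-cells $\alpha\colon A'\Rightarrow A$, $\beta\colon B\Rightarrow B'$. Relative monad: a relative monad $(X,I,S)$ in $\mathcal{K}$ consists of objects $X_0,X$, 1-cells $I,S\colon X_0\to X$, an operator $(-)^\dagger=(-)^\dagger_S\colon[I,S]\to[S,S]$ (extension) and a 2-cell $s\colon I\Rightarrow S$ (unit) such that for all 1-cells $A,B,C\colon O\to X_0$ and 2-cells $k\colon IA\Rightarrow SB$, $l\colon IB\Rightarrow SC$: $k^\dagger\cdot sA=k$; $(sA)^\dagger=1_{SA}$; $(l^\dagger\cdot k)^\dagger=l^\dagger\cdot k^\dagger$. $\mathbf{Rmd}(\mathcal{K})$: a relative monad morphism $(F,F_0,\phi)\colon(X,I,S)\to(Y,J,T)$ (with $I\colon X_0\to X$, $J\colon Y_0\to Y$, units $s,t$) consists of 1-cells $F\colon X\to Y$, $F_0\colon X_0\to Y_0$ with $FI=JF_0$ and a 2-cell $\phi\colon FS\Rightarrow TF_0$ such that $\phi\cdot Fs=tF_0$ and, for all $A,B\colon O\to X_0$ and $k\colon IA\Rightarrow SB$, $\phi B\cdot F(k^\dagger_S)=(\phi B\cdot Fk)^\dagger_T\cdot\phi A$. A relative monad transformation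 $(p,p_0)\colon(F,F_0,\phi)\Rightarrow(F',F'_0,\phi')$ consists of 2-cells $p\colon F\Rightarrow F'$, $p_0\colon F_0\Rightarrow F'_0$ with $Jp_0=pI$ and $\phi'\cdot pS=Tp_0\cdot\phi$. These form a 2-category $\mathbf{Rmd}(\mathcal{K})$; the composite of $(F,F_0,\phi)$ followed by $(G,G_0,\gamma)$ is $(GF,G_0F_0,\gamma F_0\cdot G\phi)$, identities are $(1_X,1_{X_0},1_S)$, 2-cells compose componentwise. Full sub-2-category: a 2-functor $J\colon\mathcal{K}\to\mathcal{L}$ exhibits a full sub-2-category if each $J_{x,y}\colon\mathcal{K}(x,y)\to\mathcal{L}(Jx,Jy)$ is an equivalence. *)

theory Defs
  imports Main
begin

text \<open>Composition of 1-cells is in applicative order: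
Comp1 C G F is "GF" (first F, then G). VComp C b a is b . a (first a).
HComp C b a is the horizontal composite "ba" (a on the right, i.e. applied first).\<close>

record ('o,'a,'c) two_cat =
  Obj :: "'o set"
  Arr :: "'a set"
  Cel :: "'c set"
  dom1 :: "'a \<Rightarrow> 'o"
  cod1 :: "'a \<Rightarrow> 'o"
  dom2 :: "'c \<Rightarrow> 'a"
  cod2 :: "'c \<Rightarrow> 'a"
  Id1 :: "'o \<Rightarrow> 'a"
  Comp1 :: "'a \<Rightarrow> 'a \<Rightarrow> 'a"
  Id2 :: "'a \<Rightarrow> 'c"
  VComp :: "'c \<Rightarrow> 'c \<Rightarrow> 'c"
  HComp :: "'c \<Rightarrow> 'c \<Rightarrow> 'c"

definition hom :: "('o,'a,'c) two_cat \<Rightarrow> 'o \<Rightarrow> 'o \<Rightarrow> 'a set" where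
  "hom C x y = {f \<in> Arr C. dom1 C f = x \<and> cod1 C f = y}"

definition cell :: "('o,'a,'c) two_cat \<Rightarrow> 'a \<Rightarrow> 'a \<Rightarrow> 'c set" where
  "cell C f g = {\<alpha> \<in> Cel C. dom2 C \<alpha> = f \<and> cod2 C \<alpha> = g}"

text \<open>Whiskering: lwhisk C F a = "F a", rwhisk C a F = "a F".\<close>
definition lwhisk :: "('o,'a,'c) two_cat \<Rightarrow> 'a \<Rightarrow> 'c \<Rightarrow> 'c" where
  "lwhisk C F \<alpha> = HComp C (Id2 C F) \<alpha>"

definition rwhisk :: "('o,'a,'c) two_cat \<Rightarrow> 'c \<Rightarrow> 'a \<Rightarrow> 'c" where
  "rwhisk C \<alpha> F = HComp C \<alpha> (Id2 C F)"

locale two_category =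
  fixes C :: "('o,'a,'c) two_cat"
  assumes arr_dom_cod: "f \<in> Arr C \<Longrightarrow> dom1 C f \<in> Obj C \<and> cod1 C f \<in> Obj C"
    and id1_hom: "x \<in> Obj C \<Longrightarrow> Id1 C x \<in> hom C x x"
    and comp1_hom: "f \<in> hom C x y \<Longrightarrow> g \<in> hom C y z \<Longrightarrow> Comp1 C g f \<in> hom C x z"
    and comp1_assoc: "f \<in> hom C w x \<Longrightarrow> g \<in> hom C x y \<Longrightarrow> h \<in> hom C y z \<Longrightarrow>
        Comp1 C h (Comp1 C g f) = Comp1 C (Comp1 C h g) f"
    and comp1_idl: "f \<in> hom C x y \<Longrightarrow> Comp1 C (Id1 C y) f = f"
    and comp1_idr: "f \<in> hom C x y \<Longrightarrow> Comp1 C f (Id1 C x) = f"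
    and cel_parallel: "\<alpha> \<in> Cel C \<Longrightarrow> \<exists>x y. dom2 C \<alpha> \<in> hom C x y \<and> cod2 C \<alpha> \<in> hom C x y"
    and id2_cell: "f \<in> Arr C \<Longrightarrow> Id2 C f \<in> cell C f f"
    and vcomp_cell: "\<alpha> \<in> cell C f g \<Longrightarrow> \<beta> \<in> cell C g h \<Longrightarrow> VComp C \<beta> \<alpha> \<in> cell C f h"
    and vcomp_assoc: "\<alpha> \<in> cell C f g \<Longrightarrow> \<beta> \<in> cell C g h \<Longrightarrow> \<gamma> \<in> cell C h k \<Longrightarrow>
        VComp C \<gamma> (VComp C \<beta> \<alpha>) = VComp C (VComp C \<gamma> \<beta>) \<alpha>"
    and vcomp_idl: "\<alpha> \<in> cell C f g \<Longrightarrow> VComp C (Id2 C g) \<alpha> = \<alpha>"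
    and vcomp_idr: "\<alpha> \<in> cell C f g \<Longrightarrow> VComp C \<alpha> (Id2 C f) = \<alpha>"
    and hcomp_cell: "\<alpha> \<in> cell C f f' \<Longrightarrow> \<beta> \<in> cell C g g' \<Longrightarrow> f \<in> hom C x y \<Longrightarrow> g \<in> hom C y z \<Longrightarrow>
        HComp C \<beta> \<alpha> \<in> cell C (Comp1 C g f) (Comp1 C g' f')"
    and hcomp_assoc: "\<alpha> \<in> cell C f f' \<Longrightarrow> \<beta> \<in> cell C g g' \<Longrightarrow> \<gamma> \<in> cell C h h' \<Longrightarrow>
        f \<in> hom C w x \<Longrightarrow> g \<in> hom C x y \<Longrightarrow> h \<in> hom C y z \<Longrightarrow>
        HComp C \<gamma> (HComp C \<beta> \<alpha>) = HComp C (HComp C \<gamma> \<beta>) \<alpha>"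
    and hcomp_idl: "\<alpha> \<in> cell C f f' \<Longrightarrow> f \<in> hom C x y \<Longrightarrow> HComp C (Id2 C (Id1 C y)) \<alpha> = \<alpha>"
    and hcomp_idr: "\<alpha> \<in> cell C f f' \<Longrightarrow> f \<in> hom C x y \<Longrightarrow> HComp C \<alpha> (Id2 C (Id1 C x)) = \<alpha>"
    and hcomp_id2: "f \<in> hom C x y \<Longrightarrow> g \<in> hom C y z \<Longrightarrow>
        HComp C (Id2 C g) (Id2 C f) = Id2 C (Comp1 C g f)"
    and interchange: "\<alpha> \<in> cell C f f' \<Longrightarrow> \<alpha>' \<in> cell C f' f'' \<Longrightarrow>
        \<beta> \<in> cell C g g' \<Longrightarrow> \<beta>' \<in> cell C g' g'' \<Longrightarrow> f \<in> hom C x y \<Longrightarrow> g \<in> hom C y z \<Longrightarrow>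
        HComp C (VComp C \<beta>' \<beta>) (VComp C \<alpha>' \<alpha>) = VComp C (HComp C \<beta>' \<alpha>') (HComp C \<beta> \<alpha>)"

definition two_functor ::
  "('o,'a,'c) two_cat \<Rightarrow> ('p,'b,'d) two_cat \<Rightarrow> ('o \<Rightarrow> 'p) \<Rightarrow> ('a \<Rightarrow> 'b) \<Rightarrow> ('c \<Rightarrow> 'd) \<Rightarrow> bool" where
  "two_functor C D P0 P1 P2 \<longleftrightarrow>
     (\<forall>x\<in>Obj C. P0 x \<in> Obj D) \<and>
     (\<forall>x\<in>Obj C. \<forall>y\<in>Obj C. \<forall>f\<in>hom C x y. P1 f \<in> hom D (P0 x) (P0 y)) \<and>
     (\<forall>f\<in>Arr C. \<forall>g\<in>Arr C. \<forall>\<alpha>\<in>cell C f g. P2 \<alpha> \<in> cell D (P1 f) (P1 g)) \<and>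
     (\<forall>x\<in>Obj C. P1 (Id1 C x) = Id1 D (P0 x)) \<and>
     (\<forall>x\<in>Obj C. \<forall>y\<in>Obj C. \<forall>z\<in>Obj C. \<forall>f\<in>hom C x y. \<forall>g\<in>hom C y z.
        P1 (Comp1 C g f) = Comp1 D (P1 g) (P1 f)) \<and>
     (\<forall>f\<in>Arr C. P2 (Id2 C f) = Id2 D (P1 f)) \<and>
     (\<forall>f\<in>Arr C. \<forall>g\<in>Arr C. \<forall>h\<in>Arr C. \<forall>\<alpha>\<in>cell C f g. \<forall>\<beta>\<in>cell C g h.
        P2 (VComp C \<beta> \<alpha>) = VComp D (P2 \<beta>) (P2 \<alpha>)) \<and>
     (\<forall>x\<in>Obj C. \<forall>y\<in>Obj C. \<forall>z\<in>Obj C. \<forall>f\<in>hom C x y. \<forall>f'\<in>hom C x y.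
        \<forall>g\<in>hom C y z. \<forall>g'\<in>hom C y z. \<forall>\<alpha>\<in>cell C f f'. \<forall>\<beta>\<in>cell C g g'.
        P2 (HComp C \<beta> \<alpha>) = HComp D (P2 \<beta>) (P2 \<alpha>))"

definition locally_iso ::
  "('o,'a,'c) two_cat \<Rightarrow> ('p,'b,'d) two_cat \<Rightarrow> ('o \<Rightarrow> 'p) \<Rightarrow> ('a \<Rightarrow> 'b) \<Rightarrow> ('c \<Rightarrow> 'd) \<Rightarrow> bool" where
  "locally_iso C D P0 P1 P2 \<longleftrightarrow>
     (\<forall>x\<in>Obj C. \<forall>y\<in>Obj C. bij_betw P1 (hom C x y) (hom D (P0 x) (P0 y)) \<and>
        (\<forall>f\<in>hom C x y. \<forall>g\<in>hom C x y. bij_betw P2 (cell C f g) (cell D (P1 f) (P1 g))))"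

record ('o,'a,'c) monad_data =
  mX :: 'o
  mS :: 'a
  mmul :: 'c
  munit :: 'c

definition is_monad :: "('o,'a,'c) two_cat \<Rightarrow> ('o,'a,'c) monad_data \<Rightarrow> bool" where
  "is_monad K M \<longleftrightarrow>
    (let X = mX M; S = mS M; m = mmul M; s = munit M in
      X \<in> Obj K \<and> S \<in> hom K X X \<and> m \<in> cell K (Comp1 K S S) S \<and> s \<in> cell K (Id1 K X) S \<and>
      VComp K m (lwhisk K S m) = VComp K m (rwhisk K m S) \<and>
      VComp K m (rwhisk K s S) = Id2 K S \<and>
      VComp K m (lwhisk K S s) = Id2 K S)"

record ('o,'a,'c) mnd_cell1 =
  msrc :: "('o,'a,'c) monad_data"
  mtgt :: "('o,'a,'c) monad_data"
  mF :: 'a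
  mphi :: 'c

definition is_mnd_cell1 :: "('o,'a,'c) two_cat \<Rightarrow> ('o,'a,'c) mnd_cell1 \<Rightarrow> bool" where
  "is_mnd_cell1 K f \<longleftrightarrow>
    (let M = msrc f; N = mtgt f; F = mF f; \<phi> = mphi f;
         S = mS M; m = mmul M; s = munit M; T = mS N; n = mmul N; t = munit N in
      is_monad K M \<and> is_monad K N \<and> F \<in> hom K (mX M) (mX N) \<and>
      \<phi> \<in> cell K (Comp1 K F S) (Comp1 K T F) \<and>
      VComp K \<phi> (lwhisk K F s) = rwhisk K t F \<and>
      VComp K \<phi> (lwhisk K F m) = VComp K (rwhisk K n F) (VComp K (lwhisk K T \<phi>) (rwhisk K \<phi> S)))"

record ('o,'a,'c) mnd_cell2 =
  m2src :: "('o,'a,'c) mnd_cell1"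
  m2tgt :: "('o,'a,'c) mnd_cell1"
  m2p :: 'c

definition is_mnd_cell2 :: "('o,'a,'c) two_cat \<Rightarrow> ('o,'a,'c) mnd_cell2 \<Rightarrow> bool" where
  "is_mnd_cell2 K c \<longleftrightarrow>
    (let f = m2src c; g = m2tgt c; p = m2p c in
      is_mnd_cell1 K f \<and> is_mnd_cell1 K g \<and> msrc f = msrc g \<and> mtgt f = mtgt g \<and>
      p \<in> cell K (mF f) (mF g) \<and>
      VComp K (mphi g) (rwhisk K p (mS (msrc f))) = VComp K (lwhisk K (mS (mtgt f)) p) (mphi f))"

definition mnd_comp1 :: "('o,'a,'c) two_cat \<Rightarrow> ('o,'a,'c) mnd_cell1 \<Rightarrow> ('o,'a,'c) mnd_cell1 \<Rightarrow> ('o,'a,'c) mnd_cell1" where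
  "mnd_comp1 K g f = \<lparr>msrc = msrc f, mtgt = mtgt g, mF = Comp1 K (mF g) (mF f),
      mphi = VComp K (rwhisk K (mphi g) (mF f)) (lwhisk K (mF g) (mphi f))\<rparr>"

definition Mnd :: "('o,'a,'c) two_cat \<Rightarrow>
    (('o,'a,'c) monad_data, ('o,'a,'c) mnd_cell1, ('o,'a,'c) mnd_cell2) two_cat" where
  "Mnd K = \<lparr>Obj = {M. is_monad K M}, Arr = {f. is_mnd_cell1 K f}, Cel = {c. is_mnd_cell2 K c},
     dom1 = msrc, cod1 = mtgt, dom2 = m2src, cod2 = m2tgt,
     Id1 = (\<lambda>M. \<lparr>msrc = M, mtgt = M, mF = Id1 K (mX M), mphi = Id2 K (mS M)\<rparr>),
     Comp1 = mnd_comp1 K,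
     Id2 = (\<lambda>f. \<lparr>m2src = f, m2tgt = f, m2p = Id2 K (mF f)\<rparr>),
     VComp = (\<lambda>\<beta> \<alpha>. \<lparr>m2src = m2src \<alpha>, m2tgt = m2tgt \<beta>, m2p = VComp K (m2p \<beta>) (m2p \<alpha>)\<rparr>),
     HComp = (\<lambda>\<beta> \<alpha>. \<lparr>m2src = mnd_comp1 K (m2src \<beta>) (m2src \<alpha>), m2tgt = mnd_comp1 K (m2tgt \<beta>) (m2tgt \<alpha>),
                      m2p = HComp K (m2p \<beta>) (m2p \<alpha>)\<rparr>)\<rparr>"

text \<open>An operator [F,G] \<rightarrow> [F',G'] is represented as a function op A B f, defined
(i.e. different from undefined) exactly on the well-typed triples: A : O \<rightarrow> X, B : O \<rightarrow> Y,
f : FA \<Rightarrow> GB.\<close>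

definition op_dom :: "('o,'a,'c) two_cat \<Rightarrow> 'a \<Rightarrow> 'a \<Rightarrow> ('a \<times> 'a \<times> 'c) set" where
  "op_dom K F G = {(A, B, f). \<exists>Ob\<in>Obj K. A \<in> hom K Ob (dom1 K F) \<and> B \<in> hom K Ob (dom1 K G) \<and>
      f \<in> cell K (Comp1 K F A) (Comp1 K G B)}"

definition is_operator :: "('o,'a,'c) two_cat \<Rightarrow> 'a \<Rightarrow> 'a \<Rightarrow> 'a \<Rightarrow> 'a \<Rightarrow> ('a \<Rightarrow> 'a \<Rightarrow> 'c \<Rightarrow> 'c) \<Rightarrow> bool" where
  "is_operator K F G F' G' op \<longleftrightarrow>
    (\<forall>(A, B, f)\<in>op_dom K F G. op A B f \<in> cell K (Comp1 K F' A) (Comp1 K G' B)) \<and>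
    (\<forall>A B f. (A, B, f) \<notin> op_dom K F G \<longrightarrow> op A B f = undefined) \<and>
    (\<forall>(A, B, f)\<in>op_dom K F G. \<forall>Ob'\<in>Obj K. \<forall>P\<in>hom K Ob' (dom1 K A).
        op (Comp1 K A P) (Comp1 K B P) (rwhisk K f P) = rwhisk K (op A B f) P) \<and>
    (\<forall>(A, B, f)\<in>op_dom K F G. \<forall>A'. \<forall>\<alpha>\<in>cell K A' A.
        op A' B (VComp K f (lwhisk K F \<alpha>)) = VComp K (op A B f) (lwhisk K F' \<alpha>)) \<and>
    (\<forall>(A, B, f)\<in>op_dom K F G. \<forall>B'. \<forall>\<beta>\<in>cell K B B'.
        op A B' (VComp K (lwhisk K G \<beta>) f) = VComp K (lwhisk K G' \<beta>) (op A B f))"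

record ('o,'a,'c) relmonad_data =
  rX0 :: 'o
  rX :: 'o
  rI :: 'a
  rS :: 'a
  rext :: "'a \<Rightarrow> 'a \<Rightarrow> 'c \<Rightarrow> 'c"
  runit :: 'c

definition is_relmonad :: "('o,'a,'c) two_cat \<Rightarrow> ('o,'a,'c) relmonad_data \<Rightarrow> bool" where
  "is_relmonad K R \<longleftrightarrow>
    (let X0 = rX0 R; X = rX R; I = rI R; S = rS R; e = rext R; s = runit R in
      X0 \<in> Obj K \<and> X \<in> Obj K \<and> I \<in> hom K X0 X \<and> S \<in> hom K X0 X \<and>
      is_operator K I S S S e \<and> s \<in> cell K I S \<and>
      (\<forall>Ob\<in>Obj K. \<forall>A\<in>hom K Ob X0. \<forall>B\<in>hom K Ob X0. \<forall>k\<in>cell K (Comp1 K I A) (Comp1 K S B).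
          VComp K (e A B k) (rwhisk K s A) = k) \<and>
      (\<forall>Ob\<in>Obj K. \<forall>A\<in>hom K Ob X0. e A A (rwhisk K s A) = Id2 K (Comp1 K S A)) \<and>
      (\<forall>Ob\<in>Obj K. \<forall>A\<in>hom K Ob X0. \<forall>B\<in>hom K Ob X0. \<forall>D\<in>hom K Ob X0.
        \<forall>k\<in>cell K (Comp1 K I A) (Comp1 K S B). \<forall>l\<in>cell K (Comp1 K I B) (Comp1 K S D).
          e A D (VComp K (e B D l) k) = VComp K (e B D l) (e A B k)))"

record ('o,'a,'c) rmd_cell1 =
  rsrc :: "('o,'a,'c) relmonad_data"
  rtgt :: "('o,'a,'c) relmonad_data"
  rF :: 'a
  rF0 :: 'a
  rphi :: 'c

definition is_rmd_cell1 :: "('o,'a,'c) two_cat \<Rightarrow> ('o,'a,'c) rmd_cell1 \<Rightarrow> bool" where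
  "is_rmd_cell1 K f \<longleftrightarrow>
    (let R = rsrc f; Q = rtgt f; F = rF f; F0 = rF0 f; \<phi> = rphi f in
      is_relmonad K R \<and> is_relmonad K Q \<and>
      F \<in> hom K (rX R) (rX Q) \<and> F0 \<in> hom K (rX0 R) (rX0 Q) \<and>
      Comp1 K F (rI R) = Comp1 K (rI Q) F0 \<and>
      \<phi> \<in> cell K (Comp1 K F (rS R)) (Comp1 K (rS Q) F0) \<and>
      VComp K \<phi> (lwhisk K F (runit R)) = rwhisk K (runit Q) F0 \<and>
      (\<forall>Ob\<in>Obj K. \<forall>A\<in>hom K Ob (rX0 R). \<forall>B\<in>hom K Ob (rX0 R).
        \<forall>k\<in>cell K (Comp1 K (rI R) A) (Comp1 K (rS R) B).
          VComp K (rwhisk K \<phi> B) (lwhisk K F (rext R A B k)) =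
          VComp K (rext Q (Comp1 K F0 A) (Comp1 K F0 B) (VComp K (rwhisk K \<phi> B) (lwhisk K F k)))
                  (rwhisk K \<phi> A)))"

record ('o,'a,'c) rmd_cell2 =
  r2src :: "('o,'a,'c) rmd_cell1"
  r2tgt :: "('o,'a,'c) rmd_cell1"
  r2p :: 'c
  r2p0 :: 'c

definition is_rmd_cell2 :: "('o,'a,'c) two_cat \<Rightarrow> ('o,'a,'c) rmd_cell2 \<Rightarrow> bool" where
  "is_rmd_cell2 K c \<longleftrightarrow>
    (let f = r2src c; g = r2tgt c; p = r2p c; p0 = r2p0 c in
      is_rmd_cell1 K f \<and> is_rmd_cell1 K g \<and> rsrc f = rsrc g \<and> rtgt f = rtgt g \<and>
      p \<in> cell K (rF f) (rF g) \<and> p0 \<in> cell K (rF0 f) (rF0 g) \<and>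
      lwhisk K (rI (rtgt f)) p0 = rwhisk K p (rI (rsrc f)) \<and>
      VComp K (rphi g) (rwhisk K p (rS (rsrc f))) = VComp K (lwhisk K (rS (rtgt f)) p0) (rphi f))"

definition rmd_comp1 :: "('o,'a,'c) two_cat \<Rightarrow> ('o,'a,'c) rmd_cell1 \<Rightarrow> ('o,'a,'c) rmd_cell1 \<Rightarrow> ('o,'a,'c) rmd_cell1" where
  "rmd_comp1 K g f = \<lparr>rsrc = rsrc f, rtgt = rtgt g, rF = Comp1 K (rF g) (rF f),
      rF0 = Comp1 K (rF0 g) (rF0 f),
      rphi = VComp K (rwhisk K (rphi g) (rF0 f)) (lwhisk K (rF g) (rphi f))\<rparr>"

definition Rmd :: "('o,'a,'c) two_cat \<Rightarrow>
    (('o,'a,'c) relmonad_data, ('o,'a,'c) rmd_cell1, ('o,'a,'c) rmd_cell2) two_cat" where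
  "Rmd K = \<lparr>Obj = {R. is_relmonad K R}, Arr = {f. is_rmd_cell1 K f}, Cel = {c. is_rmd_cell2 K c},
     dom1 = rsrc, cod1 = rtgt, dom2 = r2src, cod2 = r2tgt,
     Id1 = (\<lambda>R. \<lparr>rsrc = R, rtgt = R, rF = Id1 K (rX R), rF0 = Id1 K (rX0 R), rphi = Id2 K (rS R)\<rparr>),
     Comp1 = rmd_comp1 K,
     Id2 = (\<lambda>f. \<lparr>r2src = f, r2tgt = f, r2p = Id2 K (rF f), r2p0 = Id2 K (rF0 f)\<rparr>),
     VComp = (\<lambda>\<beta> \<alpha>. \<lparr>r2src = r2src \<alpha>, r2tgt = r2tgt \<beta>, r2p = VComp K (r2p \<beta>) (r2p \<alpha>),
                      r2p0 = VComp K (r2p0 \<beta>) (r2p0 \<alpha>)\<rparr>),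
     HComp = (\<lambda>\<beta> \<alpha>. \<lparr>r2src = rmd_comp1 K (r2src \<beta>) (r2src \<alpha>), r2tgt = rmd_comp1 K (r2tgt \<beta>) (r2tgt \<alpha>),
                      r2p = HComp K (r2p \<beta>) (r2p \<alpha>), r2p0 = HComp K (r2p0 \<beta>) (r2p0 \<alpha>)\<rparr>)\<rparr>"

definition mnd_to_rmd_obj :: "('o,'a,'c) two_cat \<Rightarrow> ('o,'a,'c) monad_data \<Rightarrow> ('o,'a,'c) relmonad_data" where
  "mnd_to_rmd_obj K M = \<lparr>rX0 = mX M, rX = mX M, rI = Id1 K (mX M), rS = mS M,
     rext = (\<lambda>A B f. if (A, B, f) \<in> op_dom K (Id1 K (mX M)) (mS M)
                      then VComp K (rwhisk K (mmul M) B) (lwhisk K (mS M) f) else undefined),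
     runit = munit M\<rparr>"

definition mnd_to_rmd_1 :: "('o,'a,'c) two_cat \<Rightarrow> ('o,'a,'c) mnd_cell1 \<Rightarrow> ('o,'a,'c) rmd_cell1" where
  "mnd_to_rmd_1 K f = \<lparr>rsrc = mnd_to_rmd_obj K (msrc f), rtgt = mnd_to_rmd_obj K (mtgt f),
     rF = mF f, rF0 = mF f, rphi = mphi f\<rparr>"

definition mnd_to_rmd_2 :: "('o,'a,'c) two_cat \<Rightarrow> ('o,'a,'c) mnd_cell2 \<Rightarrow> ('o,'a,'c) rmd_cell2" where
  "mnd_to_rmd_2 K c = \<lparr>r2src = mnd_to_rmd_1 K (m2src c), r2tgt = mnd_to_rmd_1 K (m2tgt c),
     r2p = m2p c, r2p0 = m2p c\<rparr>"

end

theory Submission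
  imports Defs
begin

text \<open>A relative monad along an identity is the same thing as a monad. A monad \<open>(S, m, s)\<close>
gives the extension \<open>f \<mapsto> mB \<cdot> Sf\<close>; conversely the multiplication is recovered as
\<open>m = (1\<^sub>S)\<^sup>\<dagger>\<close>, naturality of the extension operator forces \<open>f\<^sup>\<dagger> = mB \<cdot> Sf\<close>, and the three
relative monad laws then specialise to the three monad laws. For 1-cells, \<open>FI = JF\<^sub>0\<close> with \<open>I, J\<close>
identities forces \<open>F\<^sub>0 = F\<close>, and preservation of extensions by \<open>\<phi>\<close> is equivalent to the
multiplication law (for one direction evaluate it at \<open>k = 1\<^sub>S\<close>); for 2-cells, \<open>Jp\<^sub>0 = pI\<close> forces
\<open>p\<^sub>0 = p\<close>.\<close>

context two_category
begin

lemma hom_memD: "f \<in> hom C x y \<Longrightarrow> f \<in> Arr C \<and> x \<in> Obj C \<and> y \<in> Obj C"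
  using arr_dom_cod by (auto simp: hom_def)

lemma cell_cod_in_hom: "\<alpha> \<in> cell C f g \<Longrightarrow> f \<in> hom C x y \<Longrightarrow> g \<in> hom C x y"
  using cel_parallel[of \<alpha>] by (auto simp: cell_def hom_def)

lemma cell_dom_in_hom: "\<alpha> \<in> cell C f g \<Longrightarrow> g \<in> hom C x y \<Longrightarrow> f \<in> hom C x y"
  using cel_parallel[of \<alpha>] by (auto simp: cell_def hom_def)

lemma Id2_in_cell: "f \<in> hom C x y \<Longrightarrow> Id2 C f \<in> cell C f f"
  using id2_cell hom_memD by blast

lemma lwhisk_cell: "\<alpha> \<in> cell C f g \<Longrightarrow> f \<in> hom C x y \<Longrightarrow> F \<in> hom C y z \<Longrightarrow>
   lwhisk C F \<alpha> \<in> cell C (Comp1 C F f) (Comp1 C F g)"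
  unfolding lwhisk_def by (rule hcomp_cell[OF _ Id2_in_cell]) auto

lemma rwhisk_cell: "\<alpha> \<in> cell C f g \<Longrightarrow> f \<in> hom C y z \<Longrightarrow> P \<in> hom C x y \<Longrightarrow>
   rwhisk C \<alpha> P \<in> cell C (Comp1 C f P) (Comp1 C g P)"
  unfolding rwhisk_def by (rule hcomp_cell[OF Id2_in_cell]) auto

lemma lwhisk_vcomp:
  assumes "\<alpha> \<in> cell C f g" "\<beta> \<in> cell C g h" "f \<in> hom C x y" "F \<in> hom C y z"
  shows "lwhisk C F (VComp C \<beta> \<alpha>) = VComp C (lwhisk C F \<beta>) (lwhisk C F \<alpha>)"
proof -
  have F: "Id2 C F \<in> cell C F F" using assms Id2_in_cell by blast
  show ?thesis
    using interchange[OF assms(1,2) F F assms(3,4)] vcomp_idl[OF F] by (simp add: lwhisk_def)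
qed

lemma rwhisk_vcomp:
  assumes "\<alpha> \<in> cell C f g" "\<beta> \<in> cell C g h" "f \<in> hom C y z" "P \<in> hom C x y"
  shows "rwhisk C (VComp C \<beta> \<alpha>) P = VComp C (rwhisk C \<beta> P) (rwhisk C \<alpha> P)"
proof -
  have P: "Id2 C P \<in> cell C P P" using assms Id2_in_cell by blast
  show ?thesis
    using interchange[OF P P assms(1,2) assms(4,3)] vcomp_idl[OF P] by (simp add: rwhisk_def)
qed

lemma lwhisk_id2: "f \<in> hom C x y \<Longrightarrow> F \<in> hom C y z \<Longrightarrow> lwhisk C F (Id2 C f) = Id2 C (Comp1 C F f)"
  unfolding lwhisk_def by (rule hcomp_id2)

lemma rwhisk_id2: "f \<in> hom C y z \<Longrightarrow> P \<in> hom C x y \<Longrightarrow> rwhisk C (Id2 C f) P = Id2 C (Comp1 C f P)"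
  unfolding rwhisk_def by (rule hcomp_id2)

lemma lwhisk_Id1: "\<alpha> \<in> cell C f g \<Longrightarrow> f \<in> hom C x y \<Longrightarrow> lwhisk C (Id1 C y) \<alpha> = \<alpha>"
  unfolding lwhisk_def by (rule hcomp_idl)

lemma rwhisk_Id1: "\<alpha> \<in> cell C f g \<Longrightarrow> f \<in> hom C x y \<Longrightarrow> rwhisk C \<alpha> (Id1 C x) = \<alpha>"
  unfolding rwhisk_def by (rule hcomp_idr)

lemma lwhisk_lwhisk:
  "\<alpha> \<in> cell C f g \<Longrightarrow> f \<in> hom C w x \<Longrightarrow> F \<in> hom C x y \<Longrightarrow> G \<in> hom C y z \<Longrightarrow>
   lwhisk C G (lwhisk C F \<alpha>) = lwhisk C (Comp1 C G F) \<alpha>"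
  unfolding lwhisk_def
  by (subst hcomp_assoc[OF _ Id2_in_cell Id2_in_cell]; (assumption)?) (simp_all add: hcomp_id2)

lemma rwhisk_rwhisk:
  assumes "\<alpha> \<in> cell C f g" "f \<in> hom C y z" "P \<in> hom C x y" "Q \<in> hom C w x"
  shows "rwhisk C (rwhisk C \<alpha> P) Q = rwhisk C \<alpha> (Comp1 C P Q)"
  using hcomp_assoc[OF Id2_in_cell[OF assms(4)] Id2_in_cell[OF assms(3)] assms(1) assms(4,3,2)] assms
  by (simp add: rwhisk_def hcomp_id2)

lemma lwhisk_rwhisk:
  "\<alpha> \<in> cell C f g \<Longrightarrow> f \<in> hom C x y \<Longrightarrow> P \<in> hom C w x \<Longrightarrow> F \<in> hom C y z \<Longrightarrow>
   lwhisk C F (rwhisk C \<alpha> P) = rwhisk C (lwhisk C F \<alpha>) P"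
  unfolding lwhisk_def rwhisk_def by (rule hcomp_assoc[OF Id2_in_cell _ Id2_in_cell]) auto

lemma whisker_exchange:
  assumes \<alpha>: "\<alpha> \<in> cell C f f'" and \<beta>: "\<beta> \<in> cell C g g'"
    and f: "f \<in> hom C x y" and g: "g \<in> hom C y z"
  shows "VComp C (rwhisk C \<beta> f') (lwhisk C g \<alpha>) = VComp C (lwhisk C g' \<alpha>) (rwhisk C \<beta> f)"
proof -
  have f': "f' \<in> hom C x y" and g': "g' \<in> hom C y z"
    using cell_cod_in_hom[OF \<alpha> f] cell_cod_in_hom[OF \<beta> g] .
  note i = Id2_in_cell[OF f] Id2_in_cell[OF f'] Id2_in_cell[OF g] Id2_in_cell[OF g']
  have "HComp C (VComp C \<beta> (Id2 C g)) (VComp C (Id2 C f') \<alpha>) =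
        VComp C (HComp C \<beta> (Id2 C f')) (HComp C (Id2 C g) \<alpha>)"
    by (rule interchange[OF \<alpha> i(2) i(3) \<beta> f g])
  moreover have "HComp C (VComp C (Id2 C g') \<beta>) (VComp C \<alpha> (Id2 C f)) =
        VComp C (HComp C (Id2 C g') \<alpha>) (HComp C \<beta> (Id2 C f))"
    by (rule interchange[OF i(1) \<alpha> \<beta> i(4) f g])
  ultimately show ?thesis
    using assms vcomp_idl vcomp_idr by (simp add: lwhisk_def rwhisk_def)
qed

lemma op_dom_Id1_iff:
  assumes S: "S \<in> hom C X Y"
  shows "(A, B, f) \<in> op_dom C (Id1 C X) S \<longleftrightarrow>
    (\<exists>Ob\<in>Obj C. A \<in> hom C Ob X \<and> B \<in> hom C Ob X \<and> f \<in> cell C A (Comp1 C S B))"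
proof -
  have "Id1 C X \<in> hom C X X" using id1_hom hom_memD[OF S] by blast
  then have "dom1 C (Id1 C X) = X" "dom1 C S = X" using S by (simp_all add: hom_def)
  moreover have "Comp1 C (Id1 C X) A = A" if "A \<in> hom C Ob X" for Ob
    using comp1_idl[OF that] .
  ultimately show ?thesis unfolding op_dom_def by auto
qed

lemma op_dom_Id1I:
  assumes "S \<in> hom C X Y" and A: "A \<in> hom C Ob X"
    and "B \<in> hom C Ob X" "f \<in> cell C A (Comp1 C S B)"
  shows "(A, B, f) \<in> op_dom C (Id1 C X) S"
  using assms hom_memD[OF A] unfolding op_dom_Id1_iff[OF assms(1)] by blast

end

locale endo_1cell = two_category C for C :: "('o, 'a, 'c) two_cat" +
  fixes X :: 'o and S :: 'a
  assumes X: "X \<in> Obj C" and S: "S \<in> hom C X X"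
begin

lemma Id1_hom: "Id1 C X \<in> hom C X X"
  using id1_hom X by blast

lemma SS_hom: "Comp1 C S S \<in> hom C X X"
  using comp1_hom S by blast

lemma S_comp_hom: "B \<in> hom C Ob X \<Longrightarrow> Comp1 C S B \<in> hom C Ob X"
  using comp1_hom S by blast

lemma S_whisk_cell:
  "k \<in> cell C A g \<Longrightarrow> A \<in> hom C Ob X \<Longrightarrow> lwhisk C S k \<in> cell C (Comp1 C S A) (Comp1 C S g)"
  using lwhisk_cell[OF _ _ S] by blast

lemma Id2_S_cell: "Id2 C S \<in> cell C (Comp1 C (Id1 C X) S) (Comp1 C S (Id1 C X))"
  using Id2_in_cell[OF S] comp1_idl[OF S] comp1_idr[OF S] by simp

end

locale monad_in = endo_1cell C X S for C :: "('o, 'a, 'c) two_cat" and X S +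
  fixes m :: 'c and s :: 'c
  assumes mult: "m \<in> cell C (Comp1 C S S) S" and unit: "s \<in> cell C (Id1 C X) S"
    and mult_assoc: "VComp C m (lwhisk C S m) = VComp C m (rwhisk C m S)"
    and mult_unit_left: "VComp C m (rwhisk C s S) = Id2 C S"
    and mult_unit_right: "VComp C m (lwhisk C S s) = Id2 C S"
begin

definition kleisli_ext :: "'a \<Rightarrow> 'c \<Rightarrow> 'c" where
  "kleisli_ext B f = VComp C (rwhisk C m B) (lwhisk C S f)"

lemma mult_whisk_cell:
  "B \<in> hom C Ob X \<Longrightarrow> rwhisk C m B \<in> cell C (Comp1 C S (Comp1 C S B)) (Comp1 C S B)"
  using rwhisk_cell[OF mult SS_hom] comp1_assoc[OF _ S S] by metis

lemma unit_whisk_cell: "B \<in> hom C Ob X \<Longrightarrow> rwhisk C s B \<in> cell C B (Comp1 C S B)"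
  using rwhisk_cell[OF unit Id1_hom] comp1_idl by metis

lemma kleisli_ext_cell:
  "A \<in> hom C Ob X \<Longrightarrow> B \<in> hom C Ob X \<Longrightarrow> k \<in> cell C A (Comp1 C S B) \<Longrightarrow>
   kleisli_ext B k \<in> cell C (Comp1 C S A) (Comp1 C S B)"
  unfolding kleisli_ext_def using vcomp_cell S_whisk_cell mult_whisk_cell by blast

lemma mult_unit_left_whisk:
  assumes B: "B \<in> hom C Ob X"
  shows "VComp C (rwhisk C m B) (rwhisk C s (Comp1 C S B)) = Id2 C (Comp1 C S B)"
proof -
  have sS: "rwhisk C s S \<in> cell C S (Comp1 C S S)"
    using rwhisk_cell[OF unit Id1_hom S] comp1_idl[OF S] by simp
  show ?thesis
    using rwhisk_vcomp[OF sS mult S B] rwhisk_rwhisk[OF unit Id1_hom S B] mult_unit_left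
      rwhisk_id2[OF S B]
    by simp
qed

lemma mult_assoc_whisk:
  assumes D: "D \<in> hom C Ob X"
  shows "VComp C (rwhisk C m D) (lwhisk C S (rwhisk C m D)) =
    VComp C (rwhisk C m D) (rwhisk C m (Comp1 C S D))"
proof -
  have Sm: "lwhisk C S m \<in> cell C (Comp1 C S (Comp1 C S S)) (Comp1 C S S)"
    by (rule lwhisk_cell[OF mult SS_hom S])
  have mS: "rwhisk C m S \<in> cell C (Comp1 C (Comp1 C S S) S) (Comp1 C S S)"
    by (rule rwhisk_cell[OF mult SS_hom S])
  have "VComp C (rwhisk C m D) (lwhisk C S (rwhisk C m D)) =
      rwhisk C (VComp C m (lwhisk C S m)) D"
    using rwhisk_vcomp[OF Sm mult _ D] lwhisk_rwhisk[OF mult SS_hom D S] comp1_hom[OF SS_hom S]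
    by simp
  also have "\<dots> = rwhisk C (VComp C m (rwhisk C m S)) D"
    using mult_assoc by simp
  also have "\<dots> = VComp C (rwhisk C m D) (rwhisk C m (Comp1 C S D))"
    using rwhisk_vcomp[OF mS mult _ D] rwhisk_rwhisk[OF mult SS_hom S D] comp1_hom[OF S SS_hom]
    by simp
  finally show ?thesis .
qed

lemma mult_natural:
  assumes \<beta>: "\<beta> \<in> cell C B B'" and B: "B \<in> hom C Ob X"
  shows "VComp C (rwhisk C m B') (lwhisk C S (lwhisk C S \<beta>)) =
    VComp C (lwhisk C S \<beta>) (rwhisk C m B)"
  using whisker_exchange[OF \<beta> mult B SS_hom] lwhisk_lwhisk[OF \<beta> B S S] by simp

lemma kleisli_ext_comp_unit:
  assumes A: "A \<in> hom C Ob X" and B: "B \<in> hom C Ob X" and k: "k \<in> cell C A (Comp1 C S B)"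
  shows "VComp C (kleisli_ext B k) (rwhisk C s A) = k"
proof -
  have "VComp C (lwhisk C S k) (rwhisk C s A) = VComp C (rwhisk C s (Comp1 C S B)) k"
    using whisker_exchange[OF k unit A Id1_hom] lwhisk_Id1[OF k A] by simp
  then have "VComp C (kleisli_ext B k) (rwhisk C s A) =
      VComp C (VComp C (rwhisk C m B) (rwhisk C s (Comp1 C S B))) k"
    unfolding kleisli_ext_def
    using vcomp_assoc[OF unit_whisk_cell[OF A] S_whisk_cell[OF k A] mult_whisk_cell[OF B]]
      vcomp_assoc[OF k unit_whisk_cell[OF S_comp_hom[OF B]] mult_whisk_cell[OF B]]
    by simp
  then show ?thesis
    using mult_unit_left_whisk[OF B] vcomp_idl[OF k] by simp
qed

lemma kleisli_ext_unit:
  assumes A: "A \<in> hom C Ob X"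
  shows "kleisli_ext A (rwhisk C s A) = Id2 C (Comp1 C S A)"
proof -
  have Ss: "lwhisk C S s \<in> cell C S (Comp1 C S S)"
    using lwhisk_cell[OF unit Id1_hom S] comp1_idr[OF S] by simp
  have "kleisli_ext A (rwhisk C s A) = VComp C (rwhisk C m A) (rwhisk C (lwhisk C S s) A)"
    unfolding kleisli_ext_def using lwhisk_rwhisk[OF unit Id1_hom A S] by simp
  also have "\<dots> = rwhisk C (VComp C m (lwhisk C S s)) A"
    using rwhisk_vcomp[OF Ss mult S A] by simp
  finally show ?thesis
    using mult_unit_right rwhisk_id2[OF S A] by simp
qed

lemma kleisli_ext_kleisli_ext:
  assumes A: "A \<in> hom C Ob X" and B: "B \<in> hom C Ob X" and D: "D \<in> hom C Ob X"
    and k: "k \<in> cell C A (Comp1 C S B)" and l: "l \<in> cell C B (Comp1 C S D)"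
  shows "kleisli_ext D (VComp C (kleisli_ext D l) k) = VComp C (kleisli_ext D l) (kleisli_ext B k)"
proof -
  have El: "kleisli_ext D l \<in> cell C (Comp1 C S B) (Comp1 C S D)"
    by (rule kleisli_ext_cell[OF B D l])
  have Sl: "lwhisk C S l \<in> cell C (Comp1 C S B) (Comp1 C S (Comp1 C S D))"
    by (rule S_whisk_cell[OF l B])
  have Sk: "lwhisk C S k \<in> cell C (Comp1 C S A) (Comp1 C S (Comp1 C S B))"
    by (rule S_whisk_cell[OF k A])
  have SSl: "lwhisk C S (lwhisk C S l) \<in>
      cell C (Comp1 C S (Comp1 C S B)) (Comp1 C S (Comp1 C S (Comp1 C S D)))"
    by (rule S_whisk_cell[OF Sl S_comp_hom[OF B]])
  have SmD: "lwhisk C S (rwhisk C m D) \<in>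
      cell C (Comp1 C S (Comp1 C S (Comp1 C S D))) (Comp1 C S (Comp1 C S D))"
    by (rule S_whisk_cell[OF mult_whisk_cell[OF D] S_comp_hom[OF S_comp_hom[OF D]]])
  note mD = mult_whisk_cell[OF D] and mSD = mult_whisk_cell[OF S_comp_hom[OF D]]
  have "kleisli_ext D (VComp C (kleisli_ext D l) k) =
      VComp C (rwhisk C m D) (VComp C (lwhisk C S (kleisli_ext D l)) (lwhisk C S k))"
    unfolding kleisli_ext_def[of D "VComp C _ k"] using lwhisk_vcomp[OF k El A S] by simp
  also have "lwhisk C S (kleisli_ext D l) =
      VComp C (lwhisk C S (rwhisk C m D)) (lwhisk C S (lwhisk C S l))"
    unfolding kleisli_ext_def using lwhisk_vcomp[OF Sl mD S_comp_hom[OF B] S] .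
  also have "VComp C (rwhisk C m D) (VComp C (VComp C (lwhisk C S (rwhisk C m D))
        (lwhisk C S (lwhisk C S l))) (lwhisk C S k)) =
      VComp C (VComp C (VComp C (rwhisk C m D) (lwhisk C S (rwhisk C m D)))
        (lwhisk C S (lwhisk C S l))) (lwhisk C S k)"
    using vcomp_assoc[OF Sk vcomp_cell[OF SSl SmD] mD] vcomp_assoc[OF SSl SmD mD] by simp
  also have "\<dots> = VComp C (VComp C (rwhisk C m D)
        (VComp C (rwhisk C m (Comp1 C S D)) (lwhisk C S (lwhisk C S l)))) (lwhisk C S k)"
    using mult_assoc_whisk[OF D] vcomp_assoc[OF SSl mSD mD] by simp
  also have "\<dots> = VComp C (VComp C (kleisli_ext D l) (rwhisk C m B)) (lwhisk C S k)"
    using mult_natural[OF l B] vcomp_assoc[OF mult_whisk_cell[OF B] Sl mD]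
    by (simp add: kleisli_ext_def)
  also have "\<dots> = VComp C (kleisli_ext D l) (kleisli_ext B k)"
    unfolding kleisli_ext_def[of B] using vcomp_assoc[OF Sk mult_whisk_cell[OF B] El] by simp
  finally show ?thesis .
qed

lemma kleisli_ext_rwhisk:
  assumes A: "A \<in> hom C Ob X" and B: "B \<in> hom C Ob X" and f: "f \<in> cell C A (Comp1 C S B)"
    and P: "P \<in> hom C Ob' Ob"
  shows "kleisli_ext (Comp1 C B P) (rwhisk C f P) = rwhisk C (kleisli_ext B f) P"
  unfolding kleisli_ext_def
  using rwhisk_rwhisk[OF mult SS_hom B P] lwhisk_rwhisk[OF f A P S]
    rwhisk_vcomp[OF S_whisk_cell[OF f A] mult_whisk_cell[OF B] S_comp_hom[OF A] P]
  by simp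

lemma kleisli_ext_precomp:
  assumes A: "A \<in> hom C Ob X" and B: "B \<in> hom C Ob X" and f: "f \<in> cell C A (Comp1 C S B)"
    and \<alpha>: "\<alpha> \<in> cell C A' A"
  shows "kleisli_ext B (VComp C f \<alpha>) = VComp C (kleisli_ext B f) (lwhisk C S \<alpha>)"
proof -
  have A': "A' \<in> hom C Ob X" by (rule cell_dom_in_hom[OF \<alpha> A])
  show ?thesis
    unfolding kleisli_ext_def
    using lwhisk_vcomp[OF \<alpha> f A' S]
      vcomp_assoc[OF S_whisk_cell[OF \<alpha> A'] S_whisk_cell[OF f A] mult_whisk_cell[OF B]]
    by simp
qed

lemma kleisli_ext_postcomp:
  assumes A: "A \<in> hom C Ob X" and B: "B \<in> hom C Ob X" and f: "f \<in> cell C A (Comp1 C S B)"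
    and \<beta>: "\<beta> \<in> cell C B B'"
  shows "kleisli_ext B' (VComp C (lwhisk C S \<beta>) f) = VComp C (lwhisk C S \<beta>) (kleisli_ext B f)"
proof -
  have B': "B' \<in> hom C Ob X" by (rule cell_cod_in_hom[OF \<beta> B])
  have S\<beta>: "lwhisk C S \<beta> \<in> cell C (Comp1 C S B) (Comp1 C S B')" by (rule S_whisk_cell[OF \<beta> B])
  have SS\<beta>: "lwhisk C S (lwhisk C S \<beta>) \<in>
      cell C (Comp1 C S (Comp1 C S B)) (Comp1 C S (Comp1 C S B'))"
    by (rule S_whisk_cell[OF S\<beta> S_comp_hom[OF B]])
  have "kleisli_ext B' (VComp C (lwhisk C S \<beta>) f) =
      VComp C (VComp C (rwhisk C m B') (lwhisk C S (lwhisk C S \<beta>))) (lwhisk C S f)"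
    unfolding kleisli_ext_def
    using lwhisk_vcomp[OF f S\<beta> A S] vcomp_assoc[OF S_whisk_cell[OF f A] SS\<beta> mult_whisk_cell[OF B']]
    by simp
  then show ?thesis
    unfolding kleisli_ext_def
    using mult_natural[OF \<beta> B] vcomp_assoc[OF S_whisk_cell[OF f A] mult_whisk_cell[OF B] S\<beta>]
    by simp
qed

lemma kleisli_ext_Id2: "kleisli_ext (Id1 C X) (Id2 C S) = m"
  unfolding kleisli_ext_def
  using rwhisk_Id1[OF mult SS_hom] lwhisk_id2[OF S S] vcomp_idr[OF mult] by simp

definition ext :: "'a \<Rightarrow> 'a \<Rightarrow> 'c \<Rightarrow> 'c" where
  "ext A B f = (if (A, B, f) \<in> op_dom C (Id1 C X) S then kleisli_ext B f else undefined)"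

lemma ext_eq_kleisli_ext:
  assumes "A \<in> hom C Ob X" "B \<in> hom C Ob X" "f \<in> cell C A (Comp1 C S B)"
  shows "ext A B f = kleisli_ext B f"
  using op_dom_Id1I[OF S assms] by (simp add: ext_def)

lemma ext_is_operator: "is_operator C (Id1 C X) S S S ext"
  unfolding is_operator_def
proof (intro conjI ballI allI impI; clarsimp simp: op_dom_Id1_iff[OF S])
  fix A B f Ob
  assume A: "A \<in> hom C Ob X" and B: "B \<in> hom C Ob X" and f: "f \<in> cell C A (Comp1 C S B)"
  note ext_f = ext_eq_kleisli_ext[OF A B f]
  show "ext A B f \<in> cell C (Comp1 C S A) (Comp1 C S B)"
    using ext_f kleisli_ext_cell[OF A B f] by simp
  show "ext (Comp1 C A P) (Comp1 C B P) (rwhisk C f P) = rwhisk C (ext A B f) P"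
    if "P \<in> hom C Ob' (dom1 C A)" for Ob' P
  proof -
    have P: "P \<in> hom C Ob' Ob" using that A by (simp add: hom_def)
    have "rwhisk C f P \<in> cell C (Comp1 C A P) (Comp1 C S (Comp1 C B P))"
      using rwhisk_cell[OF f A P] comp1_assoc[OF P B S] by simp
    then show ?thesis
      using ext_eq_kleisli_ext[OF comp1_hom[OF P A] comp1_hom[OF P B]] ext_f
        kleisli_ext_rwhisk[OF A B f P] by simp
  qed
  show "ext A' B (VComp C f (lwhisk C (Id1 C X) \<alpha>)) = VComp C (ext A B f) (lwhisk C S \<alpha>)"
    if \<alpha>: "\<alpha> \<in> cell C A' A" for A' \<alpha>
  proof -
    have A': "A' \<in> hom C Ob X" by (rule cell_dom_in_hom[OF \<alpha> A])
    show ?thesis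
      using ext_eq_kleisli_ext[OF A' B vcomp_cell[OF \<alpha> f]] ext_f lwhisk_Id1[OF \<alpha> A']
        kleisli_ext_precomp[OF A B f \<alpha>] by simp
  qed
  show "ext A B' (VComp C (lwhisk C S \<beta>) f) = VComp C (lwhisk C S \<beta>) (ext A B f)"
    if \<beta>: "\<beta> \<in> cell C B B'" for B' \<beta>
    using ext_eq_kleisli_ext[OF A cell_cod_in_hom[OF \<beta> B] vcomp_cell[OF f S_whisk_cell[OF \<beta> B]]]
      ext_f kleisli_ext_postcomp[OF A B f \<beta>] by simp
next
  fix A B f
  assume "\<forall>Ob\<in>Obj C. B \<in> hom C Ob X \<longrightarrow> A \<in> hom C Ob X \<longrightarrow> f \<notin> cell C A (Comp1 C S B)"
  then show "ext A B f = undefined" unfolding ext_def op_dom_Id1_iff[OF S] by auto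
qed

lemma is_relmonad_ext:
  "is_relmonad C \<lparr>rX0 = X, rX = X, rI = Id1 C X, rS = S, rext = ext, runit = s\<rparr>"
  unfolding is_relmonad_def Let_def relmonad_data.simps
proof (intro conjI ballI X Id1_hom S ext_is_operator unit)
  fix Ob A B k
  assume A: "A \<in> hom C Ob X" and B: "B \<in> hom C Ob X"
    and "k \<in> cell C (Comp1 C (Id1 C X) A) (Comp1 C S B)"
  then have k: "k \<in> cell C A (Comp1 C S B)" using comp1_idl[OF A] by simp
  show "VComp C (ext A B k) (rwhisk C s A) = k"
    using kleisli_ext_comp_unit[OF A B k] ext_eq_kleisli_ext[OF A B k] by simp
next
  fix Ob A
  assume A: "A \<in> hom C Ob X"
  show "ext A A (rwhisk C s A) = Id2 C (Comp1 C S A)"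
    using kleisli_ext_unit[OF A] ext_eq_kleisli_ext[OF A A unit_whisk_cell[OF A]] by simp
next
  fix Ob A B D k l
  assume A: "A \<in> hom C Ob X" and B: "B \<in> hom C Ob X" and D: "D \<in> hom C Ob X"
    and "k \<in> cell C (Comp1 C (Id1 C X) A) (Comp1 C S B)"
    and "l \<in> cell C (Comp1 C (Id1 C X) B) (Comp1 C S D)"
  then have k: "k \<in> cell C A (Comp1 C S B)" and l: "l \<in> cell C B (Comp1 C S D)"
    using comp1_idl[OF A] comp1_idl[OF B] by simp_all
  show "ext A D (VComp C (ext B D l) k) = VComp C (ext B D l) (ext A B k)"
    using kleisli_ext_kleisli_ext[OF A B D k l] ext_eq_kleisli_ext[OF A B k]
      ext_eq_kleisli_ext[OF B D l]
      ext_eq_kleisli_ext[OF A D vcomp_cell[OF k kleisli_ext_cell[OF B D l]]]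
    by simp
qed

lemma ext_Id2: "ext S (Id1 C X) (Id2 C S) = m"
  using ext_eq_kleisli_ext[OF S Id1_hom] kleisli_ext_Id2 Id2_in_cell[OF S] comp1_idr[OF S] by simp

end

lemma is_operator_cell:
  "is_operator K F G F' G' e \<Longrightarrow> (A, B, f) \<in> op_dom K F G \<Longrightarrow>
   e A B f \<in> cell K (Comp1 K F' A) (Comp1 K G' B)"
  unfolding is_operator_def by blast

lemma is_operator_undefined:
  "is_operator K F G F' G' e \<Longrightarrow> (A, B, f) \<notin> op_dom K F G \<Longrightarrow> e A B f = undefined"
  unfolding is_operator_def by blast

lemma is_operator_rwhisk:
  "is_operator K F G F' G' e \<Longrightarrow> (A, B, f) \<in> op_dom K F G \<Longrightarrow> Ob' \<in> Obj K \<Longrightarrow>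
   P \<in> hom K Ob' (dom1 K A) \<Longrightarrow>
   e (Comp1 K A P) (Comp1 K B P) (rwhisk K f P) = rwhisk K (e A B f) P"
  unfolding is_operator_def by fast

lemma is_operator_precomp:
  "is_operator K F G F' G' e \<Longrightarrow> (A, B, f) \<in> op_dom K F G \<Longrightarrow> \<alpha> \<in> cell K A' A \<Longrightarrow>
   e A' B (VComp K f (lwhisk K F \<alpha>)) = VComp K (e A B f) (lwhisk K F' \<alpha>)"
  unfolding is_operator_def by fast

locale id_relative_monad = endo_1cell C X S for C :: "('o, 'a, 'c) two_cat" and X S +
  fixes e :: "'a \<Rightarrow> 'a \<Rightarrow> 'c \<Rightarrow> 'c" and s :: 'c
  assumes ext_operator: "is_operator C (Id1 C X) S S S e" and unit: "s \<in> cell C (Id1 C X) S"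
    and ext_comp_unit: "\<And>Ob A B k. Ob \<in> Obj C \<Longrightarrow> A \<in> hom C Ob X \<Longrightarrow> B \<in> hom C Ob X \<Longrightarrow>
        k \<in> cell C (Comp1 C (Id1 C X) A) (Comp1 C S B) \<Longrightarrow> VComp C (e A B k) (rwhisk C s A) = k"
    and ext_unit: "\<And>Ob A. Ob \<in> Obj C \<Longrightarrow> A \<in> hom C Ob X \<Longrightarrow>
        e A A (rwhisk C s A) = Id2 C (Comp1 C S A)"
    and ext_ext: "\<And>Ob A B D k l. Ob \<in> Obj C \<Longrightarrow>
        A \<in> hom C Ob X \<Longrightarrow> B \<in> hom C Ob X \<Longrightarrow> D \<in> hom C Ob X \<Longrightarrow>
        k \<in> cell C (Comp1 C (Id1 C X) A) (Comp1 C S B) \<Longrightarrow>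
        l \<in> cell C (Comp1 C (Id1 C X) B) (Comp1 C S D) \<Longrightarrow>
        e A D (VComp C (e B D l) k) = VComp C (e B D l) (e A B k)"
begin

definition mult :: 'c where
  "mult = e S (Id1 C X) (Id2 C S)"

lemma Id2_S_op_dom: "(S, Id1 C X, Id2 C S) \<in> op_dom C (Id1 C X) S"
  using op_dom_Id1I[OF S S Id1_hom] Id2_S_cell comp1_idl[OF S] by simp

lemma mult_cell: "mult \<in> cell C (Comp1 C S S) S"
  using is_operator_cell[OF ext_operator Id2_S_op_dom] comp1_idr[OF S] unfolding mult_def by simp

text \<open>The extension is determined by \<open>mult\<close>: write \<open>f\<close> as \<open>1\<^sub>S\<^sub>B \<cdot> f\<close>, move \<open>f\<close> out by naturality in the
first argument, and obtain \<open>(1\<^sub>S\<^sub>B)\<^sup>\<dagger> = (1\<^sub>S)\<^sup>\<dagger>B\<close> from naturality in the span.\<close>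

lemma ext_eq_mult:
  assumes A: "A \<in> hom C Ob X" and B: "B \<in> hom C Ob X" and f: "f \<in> cell C A (Comp1 C S B)"
  shows "e A B f = VComp C (rwhisk C mult B) (lwhisk C S f)"
proof -
  have SB: "Comp1 C S B \<in> hom C Ob X" using comp1_hom B S by blast
  have Ob: "Ob \<in> Obj C" using hom_memD[OF A] by blast
  have "B \<in> hom C Ob (dom1 C S)" using B S by (simp add: hom_def)
  then have "e (Comp1 C S B) B (Id2 C (Comp1 C S B)) = rwhisk C mult B"
    using is_operator_rwhisk[OF ext_operator Id2_S_op_dom Ob, of B] comp1_idl[OF B] rwhisk_id2[OF S B]
    unfolding mult_def by simp
  moreover have "e A B (VComp C (Id2 C (Comp1 C S B)) (lwhisk C (Id1 C X) f)) =
      VComp C (e (Comp1 C S B) B (Id2 C (Comp1 C S B))) (lwhisk C S f)"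
    using is_operator_precomp[OF ext_operator op_dom_Id1I[OF S SB B Id2_in_cell[OF SB]] f] .
  ultimately show ?thesis using lwhisk_Id1[OF f A] vcomp_idl[OF f] by simp
qed

lemma mult_unit_left: "VComp C mult (rwhisk C s S) = Id2 C S"
  using ext_comp_unit[OF X S Id1_hom Id2_S_cell] comp1_idl[OF S] unfolding mult_def by simp

lemma mult_unit_right: "VComp C mult (lwhisk C S s) = Id2 C S"
proof -
  have "e (Id1 C X) (Id1 C X) s = Id2 C S"
    using ext_unit[OF X Id1_hom] rwhisk_Id1[OF unit Id1_hom] comp1_idr[OF S] by simp
  moreover have "e (Id1 C X) (Id1 C X) s = VComp C mult (lwhisk C S s)"
    using ext_eq_mult[OF Id1_hom Id1_hom] unit comp1_idr[OF S] rwhisk_Id1[OF mult_cell SS_hom]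
    by simp
  ultimately show ?thesis by simp
qed

text \<open>Associativity is \<open>ext_ext\<close> for \<open>k = 1\<^sub>S\<^sub>S\<close> and \<open>l = 1\<^sub>S\<close>.\<close>

lemma mult_assoc: "VComp C mult (lwhisk C S mult) = VComp C mult (rwhisk C mult S)"
proof -
  have k: "Id2 C (Comp1 C S S) \<in> cell C (Comp1 C (Id1 C X) (Comp1 C S S)) (Comp1 C S S)"
    using Id2_in_cell[OF SS_hom] comp1_idl[OF SS_hom] by simp
  have "e (Comp1 C S S) (Id1 C X) (VComp C mult (Id2 C (Comp1 C S S))) =
      VComp C mult (e (Comp1 C S S) S (Id2 C (Comp1 C S S)))"
    using ext_ext[OF X SS_hom S Id1_hom k Id2_S_cell] unfolding mult_def by simp
  moreover have "e (Comp1 C S S) (Id1 C X) mult = VComp C mult (lwhisk C S mult)"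
    using ext_eq_mult[OF SS_hom Id1_hom] mult_cell comp1_idr[OF S] rwhisk_Id1[OF mult_cell SS_hom]
    by simp
  moreover have "e (Comp1 C S S) S (Id2 C (Comp1 C S S)) = rwhisk C mult S"
    using ext_eq_mult[OF SS_hom S Id2_in_cell[OF SS_hom]] lwhisk_id2[OF SS_hom S]
      vcomp_idr[OF rwhisk_cell[OF mult_cell SS_hom S]] comp1_assoc[OF S S S]
    by simp
  ultimately show ?thesis using vcomp_idr[OF mult_cell] by simp
qed

lemma monad_in: "monad_in C X S mult s"
  by unfold_locales (rule X S mult_cell unit mult_assoc mult_unit_left mult_unit_right)+

lemma monad_ext_eq: "monad_in.ext C X S mult = e"
proof (intro ext)
  fix A B f
  show "monad_in.ext C X S mult A B f = e A B f"
  proof (cases "(A, B, f) \<in> op_dom C (Id1 C X) S")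
    case True
    then obtain Ob where "A \<in> hom C Ob X" "B \<in> hom C Ob X" "f \<in> cell C A (Comp1 C S B)"
      unfolding op_dom_Id1_iff[OF S] by blast
    then show ?thesis
      using monad_in.ext_eq_kleisli_ext[OF monad_in] ext_eq_mult monad_in.kleisli_ext_def[OF monad_in]
      by metis
  next
    case False
    then show ?thesis
      using is_operator_undefined[OF ext_operator] monad_in.ext_def[OF monad_in] by simp
  qed
qed

end

locale monad_opfunctor_data =
  M1: monad_in C X S m s + M2: monad_in C Y T n t
  for C :: "('o, 'a, 'c) two_cat" and X S m s Y T n t +
  fixes F :: 'a and \<phi> :: 'c
  assumes F: "F \<in> hom C X Y" and \<phi>: "\<phi> \<in> cell C (Comp1 C F S) (Comp1 C T F)"
begin

definition preserves_mult :: bool where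
  "preserves_mult \<longleftrightarrow>
    VComp C \<phi> (lwhisk C F m) = VComp C (rwhisk C n F) (VComp C (lwhisk C T \<phi>) (rwhisk C \<phi> S))"

lemma FS_hom: "Comp1 C F S \<in> hom C X Y"
  using M1.comp1_hom[OF M1.S F] .

lemma F_comp_hom: "B \<in> hom C Ob X \<Longrightarrow> Comp1 C F B \<in> hom C Ob Y"
  using M1.comp1_hom F by blast

lemma \<phi>_whisk_cell:
  assumes B: "B \<in> hom C Ob X"
  shows "rwhisk C \<phi> B \<in> cell C (Comp1 C F (Comp1 C S B)) (Comp1 C T (Comp1 C F B))"
  using M1.rwhisk_cell[OF \<phi> FS_hom B] M1.comp1_assoc[OF B M1.S F] M1.comp1_assoc[OF B F M2.S]
  by simp

lemma \<phi>_mult_cells: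
  "rwhisk C \<phi> S \<in> cell C (Comp1 C F (Comp1 C S S)) (Comp1 C T (Comp1 C F S))"
  "lwhisk C T \<phi> \<in> cell C (Comp1 C T (Comp1 C F S)) (Comp1 C T (Comp1 C T F))"
  "rwhisk C n F \<in> cell C (Comp1 C T (Comp1 C T F)) (Comp1 C T F)"
  using \<phi>_whisk_cell[OF M1.S] M1.lwhisk_cell[OF \<phi> FS_hom M2.S]
    M1.rwhisk_cell[OF M2.mult M2.SS_hom F] M1.comp1_assoc[OF F M2.S M2.S]
  by simp_all

lemma preserves_mult_whisk:
  assumes preserves_mult and B: "B \<in> hom C Ob X"
  shows "VComp C (rwhisk C \<phi> B) (lwhisk C F (rwhisk C m B)) =
    VComp C (rwhisk C n (Comp1 C F B))
      (VComp C (lwhisk C T (rwhisk C \<phi> B)) (rwhisk C \<phi> (Comp1 C S B)))"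
proof -
  have FSS: "Comp1 C F (Comp1 C S S) \<in> hom C X Y" using M1.comp1_hom M1.SS_hom F by blast
  have Fm: "lwhisk C F m \<in> cell C (Comp1 C F (Comp1 C S S)) (Comp1 C F S)"
    using M1.lwhisk_cell[OF M1.mult M1.SS_hom F] .
  note cells = \<phi>_mult_cells
  have "VComp C (rwhisk C \<phi> B) (lwhisk C F (rwhisk C m B)) = rwhisk C (VComp C \<phi> (lwhisk C F m)) B"
    using M1.rwhisk_vcomp[OF Fm \<phi> FSS B] M1.lwhisk_rwhisk[OF M1.mult M1.SS_hom B F] by simp
  also have "\<dots> = rwhisk C (VComp C (rwhisk C n F) (VComp C (lwhisk C T \<phi>) (rwhisk C \<phi> S))) B"
    using \<open>preserves_mult\<close> unfolding preserves_mult_def by simp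
  also have "\<dots> = VComp C (rwhisk C (rwhisk C n F) B)
      (VComp C (rwhisk C (lwhisk C T \<phi>) B) (rwhisk C (rwhisk C \<phi> S) B))"
    using M1.rwhisk_vcomp[OF M1.vcomp_cell[OF cells(1,2)] cells(3) FSS B]
      M1.rwhisk_vcomp[OF cells(1,2) FSS B]
    by simp
  also have "\<dots> = VComp C (rwhisk C n (Comp1 C F B))
      (VComp C (lwhisk C T (rwhisk C \<phi> B)) (rwhisk C \<phi> (Comp1 C S B)))"
    using M1.rwhisk_rwhisk[OF M2.mult M2.SS_hom F B] M1.lwhisk_rwhisk[OF \<phi> FS_hom B M2.S]
      M1.rwhisk_rwhisk[OF \<phi> FS_hom M1.S B]
    by simp
  finally show ?thesis .
qed

text \<open>Multiplicativity of \<open>\<phi>\<close> whiskered by \<open>B\<close>, followed by naturality of \<open>\<phi>\<close> with respect to \<open>k\<close>.\<close>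

lemma kleisli_ext_transfer:
  assumes preserves_mult
    and A: "A \<in> hom C Ob X" and B: "B \<in> hom C Ob X" and k: "k \<in> cell C A (Comp1 C S B)"
  shows "VComp C (rwhisk C \<phi> B) (lwhisk C F (M1.kleisli_ext B k)) =
    VComp C (M2.kleisli_ext (Comp1 C F B) (VComp C (rwhisk C \<phi> B) (lwhisk C F k))) (rwhisk C \<phi> A)"
proof -
  have SA: "Comp1 C S A \<in> hom C Ob X" and SB: "Comp1 C S B \<in> hom C Ob X"
    using M1.S_comp_hom A B by blast+
  note \<phi>A = \<phi>_whisk_cell[OF A] and \<phi>B = \<phi>_whisk_cell[OF B] and \<phi>SB = \<phi>_whisk_cell[OF SB]
  have Fk: "lwhisk C F k \<in> cell C (Comp1 C F A) (Comp1 C F (Comp1 C S B))"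
    using M1.lwhisk_cell[OF k A F] .
  have Sk: "lwhisk C S k \<in> cell C (Comp1 C S A) (Comp1 C S (Comp1 C S B))"
    using M1.S_whisk_cell[OF k A] .
  have FSk: "lwhisk C F (lwhisk C S k) \<in>
      cell C (Comp1 C F (Comp1 C S A)) (Comp1 C F (Comp1 C S (Comp1 C S B)))"
    using M1.lwhisk_cell[OF Sk SA F] .
  have TFk: "lwhisk C T (lwhisk C F k) \<in>
      cell C (Comp1 C T (Comp1 C F A)) (Comp1 C T (Comp1 C F (Comp1 C S B)))"
    using M2.S_whisk_cell[OF Fk F_comp_hom[OF A]] .
  have FmB: "lwhisk C F (rwhisk C m B) \<in>
      cell C (Comp1 C F (Comp1 C S (Comp1 C S B))) (Comp1 C F (Comp1 C S B))"
    using M1.lwhisk_cell[OF M1.mult_whisk_cell[OF B] M1.S_comp_hom[OF SB] F] .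
  have T\<phi>B: "lwhisk C T (rwhisk C \<phi> B) \<in>
      cell C (Comp1 C T (Comp1 C F (Comp1 C S B))) (Comp1 C T (Comp1 C T (Comp1 C F B)))"
    using M2.S_whisk_cell[OF \<phi>B F_comp_hom[OF SB]] .
  note nFB = M2.mult_whisk_cell[OF F_comp_hom[OF B]]
  have \<phi>_natural: "VComp C (rwhisk C \<phi> (Comp1 C S B)) (lwhisk C F (lwhisk C S k)) =
      VComp C (lwhisk C T (lwhisk C F k)) (rwhisk C \<phi> A)"
    using M1.whisker_exchange[OF k \<phi> A FS_hom] M1.lwhisk_lwhisk[OF k A M1.S F]
      M1.lwhisk_lwhisk[OF k A F M2.S]
    by simp
  have "VComp C (rwhisk C \<phi> B) (lwhisk C F (M1.kleisli_ext B k)) =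
      VComp C (VComp C (rwhisk C \<phi> B) (lwhisk C F (rwhisk C m B))) (lwhisk C F (lwhisk C S k))"
    unfolding M1.kleisli_ext_def
    using M1.lwhisk_vcomp[OF Sk M1.mult_whisk_cell[OF B] SA F] M1.vcomp_assoc[OF FSk FmB \<phi>B]
    by simp
  also have "\<dots> = VComp C (rwhisk C n (Comp1 C F B)) (VComp C (lwhisk C T (rwhisk C \<phi> B))
      (VComp C (rwhisk C \<phi> (Comp1 C S B)) (lwhisk C F (lwhisk C S k))))"
    using preserves_mult_whisk[OF assms(1) B] M1.vcomp_assoc[OF FSk M1.vcomp_cell[OF \<phi>SB T\<phi>B] nFB]
      M1.vcomp_assoc[OF FSk \<phi>SB T\<phi>B]
    by simp
  also have "\<dots> = VComp C (VComp C (rwhisk C n (Comp1 C F B))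
      (VComp C (lwhisk C T (rwhisk C \<phi> B)) (lwhisk C T (lwhisk C F k)))) (rwhisk C \<phi> A)"
    using \<phi>_natural M1.vcomp_assoc[OF \<phi>A TFk T\<phi>B]
      M1.vcomp_assoc[OF \<phi>A M1.vcomp_cell[OF TFk T\<phi>B] nFB]
    by simp
  also have "\<dots> = VComp C (M2.kleisli_ext (Comp1 C F B) (VComp C (rwhisk C \<phi> B) (lwhisk C F k)))
      (rwhisk C \<phi> A)"
    unfolding M2.kleisli_ext_def using M1.lwhisk_vcomp[OF Fk \<phi>B F_comp_hom[OF A] M2.S] by simp
  finally show ?thesis .
qed

lemma preserves_multI:
  assumes "VComp C (rwhisk C \<phi> (Id1 C X)) (lwhisk C F (M1.ext S (Id1 C X) (Id2 C S))) =
    VComp C (M2.ext (Comp1 C F S) (Comp1 C F (Id1 C X))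
      (VComp C (rwhisk C \<phi> (Id1 C X)) (lwhisk C F (Id2 C S)))) (rwhisk C \<phi> S)"
  shows preserves_mult
proof -
  have "rwhisk C \<phi> (Id1 C X) = \<phi>" using M1.rwhisk_Id1[OF \<phi> FS_hom] .
  moreover have "VComp C \<phi> (lwhisk C F (Id2 C S)) = \<phi>"
    using M1.lwhisk_id2[OF M1.S F] M1.vcomp_idr[OF \<phi>] by simp
  moreover have "M2.ext (Comp1 C F S) F \<phi> = M2.kleisli_ext F \<phi>"
    using M2.ext_eq_kleisli_ext[OF FS_hom F \<phi>] .
  ultimately show ?thesis
    using assms M1.ext_Id2 M1.comp1_idr[OF F] M1.vcomp_assoc[OF \<phi>_mult_cells]
    unfolding M2.kleisli_ext_def preserves_mult_def by simp
qed

end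

lemma monad_in_monad_data:
  "two_category K \<Longrightarrow> is_monad K M \<Longrightarrow> monad_in K (mX M) (mS M) (mmul M) (munit M)"
  unfolding is_monad_def Let_def monad_in_def monad_in_axioms_def endo_1cell_def endo_1cell_axioms_def
  by blast

lemma mnd_to_rmd_obj_eq:
  assumes "two_category K" "is_monad K M"
  shows "mnd_to_rmd_obj K M = \<lparr>rX0 = mX M, rX = mX M, rI = Id1 K (mX M), rS = mS M,
     rext = monad_in.ext K (mX M) (mS M) (mmul M), runit = munit M\<rparr>"
proof -
  interpret monad_in K "mX M" "mS M" "mmul M" "munit M" using monad_in_monad_data[OF assms] .
  show ?thesis unfolding mnd_to_rmd_obj_def by (simp add: ext_def kleisli_ext_def fun_eq_iff)
qed

lemma is_relmonad_mnd_to_rmd_obj: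
  assumes "two_category K" "is_monad K M"
  shows "is_relmonad K (mnd_to_rmd_obj K M)"
proof -
  interpret monad_in K "mX M" "mS M" "mmul M" "munit M" using monad_in_monad_data[OF assms] .
  show ?thesis using is_relmonad_ext mnd_to_rmd_obj_eq[OF assms] by simp
qed

lemma monad_opfunctor_data_mnd_cell1:
  assumes "two_category K" and "is_mnd_cell1 K f"
  shows "monad_opfunctor_data K (mX (msrc f)) (mS (msrc f)) (mmul (msrc f)) (munit (msrc f))
    (mX (mtgt f)) (mS (mtgt f)) (mmul (mtgt f)) (munit (mtgt f)) (mF f) (mphi f)"
  using assms monad_in_monad_data[OF assms(1)]
  unfolding is_mnd_cell1_def Let_def monad_opfunctor_data_def monad_opfunctor_data_axioms_def
  by auto

lemma is_rmd_cell1_mnd_to_rmd_1: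
  assumes K: "two_category K" and f: "is_mnd_cell1 K f"
  shows "is_rmd_cell1 K (mnd_to_rmd_1 K f)"
proof -
  interpret monad_opfunctor_data K "mX (msrc f)" "mS (msrc f)" "mmul (msrc f)" "munit (msrc f)"
    "mX (mtgt f)" "mS (mtgt f)" "mmul (mtgt f)" "munit (mtgt f)" "mF f" "mphi f"
    using monad_opfunctor_data_mnd_cell1[OF K f] .
  have monads: "is_monad K (msrc f)" "is_monad K (mtgt f)"
    and unit_law: "VComp K (mphi f) (lwhisk K (mF f) (munit (msrc f))) =
      rwhisk K (munit (mtgt f)) (mF f)"
    and preserves_mult
    using f unfolding is_mnd_cell1_def Let_def preserves_mult_def by auto
  have FI: "Comp1 K (mF f) (Id1 K (mX (msrc f))) = Comp1 K (Id1 K (mX (mtgt f))) (mF f)"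
    using M1.comp1_idr[OF F] M1.comp1_idl[OF F] by simp
  show ?thesis
    unfolding is_rmd_cell1_def Let_def mnd_to_rmd_1_def rmd_cell1.simps
    unfolding mnd_to_rmd_obj_eq[OF K monads(1)] mnd_to_rmd_obj_eq[OF K monads(2)]
      relmonad_data.simps
  proof (intro conjI ballI)
    fix Ob A B k
    assume A: "A \<in> hom K Ob (mX (msrc f))" and B: "B \<in> hom K Ob (mX (msrc f))"
      and "k \<in> cell K (Comp1 K (Id1 K (mX (msrc f))) A) (Comp1 K (mS (msrc f)) B)"
    then have k: "k \<in> cell K A (Comp1 K (mS (msrc f)) B)" using M1.comp1_idl[OF A] by simp
    have "VComp K (rwhisk K (mphi f) B) (lwhisk K (mF f) k) \<in>
        cell K (Comp1 K (mF f) A) (Comp1 K (mS (mtgt f)) (Comp1 K (mF f) B))"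
      using M1.vcomp_cell[OF M1.lwhisk_cell[OF k A F] \<phi>_whisk_cell[OF B]] .
    then show "VComp K (rwhisk K (mphi f) B) (lwhisk K (mF f) (M1.ext A B k)) =
       VComp K (M2.ext (Comp1 K (mF f) A) (Comp1 K (mF f) B)
         (VComp K (rwhisk K (mphi f) B) (lwhisk K (mF f) k))) (rwhisk K (mphi f) A)"
      using kleisli_ext_transfer[OF \<open>preserves_mult\<close> A B k] M1.ext_eq_kleisli_ext[OF A B k]
        M2.ext_eq_kleisli_ext[OF F_comp_hom[OF A] F_comp_hom[OF B]]
      by simp
  qed (use F \<phi> FI unit_law M1.is_relmonad_ext M2.is_relmonad_ext
    is_relmonad_mnd_to_rmd_obj[OF K] monads in simp_all)
qed

lemma is_rmd_cell2_mnd_to_rmd_2: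
  assumes K: "two_category K" and c: "is_mnd_cell2 K c"
  shows "is_rmd_cell2 K (mnd_to_rmd_2 K c)"
proof -
  interpret two_category K by (rule K)
  have f: "is_mnd_cell1 K (m2src c)" and g: "is_mnd_cell1 K (m2tgt c)"
    and p: "m2p c \<in> cell K (mF (m2src c)) (mF (m2tgt c))"
    using c unfolding is_mnd_cell2_def Let_def by auto
  have F: "mF (m2src c) \<in> hom K (mX (msrc (m2src c))) (mX (mtgt (m2src c)))"
    and monads: "is_monad K (msrc (m2src c))" "is_monad K (mtgt (m2src c))"
    using f unfolding is_mnd_cell1_def Let_def by auto
  have ends: "msrc (m2src c) = msrc (m2tgt c)" "mtgt (m2src c) = mtgt (m2tgt c)"
    and square: "VComp K (mphi (m2tgt c)) (rwhisk K (m2p c) (mS (msrc (m2src c)))) =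
      VComp K (lwhisk K (mS (mtgt (m2src c))) (m2p c)) (mphi (m2src c))"
    using c unfolding is_mnd_cell2_def Let_def by auto
  show ?thesis
    unfolding is_rmd_cell2_def Let_def mnd_to_rmd_2_def rmd_cell2.simps mnd_to_rmd_1_def
      rmd_cell1.simps
    using is_rmd_cell1_mnd_to_rmd_1[OF K f] is_rmd_cell1_mnd_to_rmd_1[OF K g] ends p square
      lwhisk_Id1[OF p F] rwhisk_Id1[OF p F]
      mnd_to_rmd_obj_eq[OF K monads(1)] mnd_to_rmd_obj_eq[OF K monads(2)]
    by (simp add: mnd_to_rmd_1_def)
qed

lemma two_functor_mnd_to_rmd:
  assumes K: "two_category K"
  shows "two_functor (Mnd K) (Rmd K) (mnd_to_rmd_obj K) (mnd_to_rmd_1 K) (mnd_to_rmd_2 K)"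
  unfolding two_functor_def
proof (intro conjI ballI)
  fix x assume "x \<in> Obj (Mnd K)"
  then show "mnd_to_rmd_obj K x \<in> Obj (Rmd K)"
    using is_relmonad_mnd_to_rmd_obj[OF K] by (simp add: Mnd_def Rmd_def)
next
  fix x y f assume "f \<in> hom (Mnd K) x y"
  then show "mnd_to_rmd_1 K f \<in> hom (Rmd K) (mnd_to_rmd_obj K x) (mnd_to_rmd_obj K y)"
    using is_rmd_cell1_mnd_to_rmd_1[OF K] by (auto simp: Mnd_def Rmd_def hom_def mnd_to_rmd_1_def)
next
  fix f g \<alpha> assume "\<alpha> \<in> cell (Mnd K) f g"
  then show "mnd_to_rmd_2 K \<alpha> \<in> cell (Rmd K) (mnd_to_rmd_1 K f) (mnd_to_rmd_1 K g)"
    using is_rmd_cell2_mnd_to_rmd_2[OF K]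
    by (auto simp: Mnd_def Rmd_def cell_def mnd_to_rmd_2_def)
qed (simp_all add: Mnd_def Rmd_def mnd_to_rmd_1_def mnd_to_rmd_2_def mnd_to_rmd_obj_def
  mnd_comp1_def rmd_comp1_def)

lemma inj_on_mnd_to_rmd_obj:
  assumes K: "two_category K"
  shows "inj_on (mnd_to_rmd_obj K) (Obj (Mnd K))"
proof (rule inj_onI)
  fix M N
  assume "M \<in> Obj (Mnd K)" "N \<in> Obj (Mnd K)" and eq: "mnd_to_rmd_obj K M = mnd_to_rmd_obj K N"
  then have M: "is_monad K M" and N: "is_monad K N" by (auto simp: Mnd_def)
  interpret M: monad_in K "mX M" "mS M" "mmul M" "munit M" using monad_in_monad_data[OF K M] .
  interpret N: monad_in K "mX N" "mS N" "mmul N" "munit N" using monad_in_monad_data[OF K N] .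
  have same: "mX M = mX N" "mS M = mS N" "munit M = munit N" "M.ext = N.ext"
    using eq unfolding mnd_to_rmd_obj_eq[OF K M] mnd_to_rmd_obj_eq[OF K N]
      relmonad_data.ext_inject
    by blast+
  then have "mmul M = mmul N" using M.ext_Id2 N.ext_Id2 by metis
  with same show "M = N" by (simp add: monad_data.equality)
qed

lemma mnd_to_rmd_obj_image:
  assumes K: "two_category K"
  shows "mnd_to_rmd_obj K ` Obj (Mnd K) = {R \<in> Obj (Rmd K). rX0 R = rX R \<and> rI R = Id1 K (rX R)}"
proof
  show "mnd_to_rmd_obj K ` Obj (Mnd K) \<subseteq> {R \<in> Obj (Rmd K). rX0 R = rX R \<and> rI R = Id1 K (rX R)}"
    using is_relmonad_mnd_to_rmd_obj[OF K] mnd_to_rmd_obj_eq[OF K] by (auto simp: Mnd_def Rmd_def)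
next
  show "{R \<in> Obj (Rmd K). rX0 R = rX R \<and> rI R = Id1 K (rX R)} \<subseteq> mnd_to_rmd_obj K ` Obj (Mnd K)"
  proof clarify
    fix R
    assume R: "R \<in> Obj (Rmd K)" and X0: "rX0 R = rX R" and I: "rI R = Id1 K (rX R)"
    interpret id_relative_monad K "rX R" "rS R" "rext R" "runit R"
      using R K X0 I
      unfolding Rmd_def is_relmonad_def Let_def id_relative_monad_def id_relative_monad_axioms_def
        endo_1cell_def endo_1cell_axioms_def
      by auto
    define M where "M = \<lparr>mX = rX R, mS = rS R, mmul = mult, munit = runit R\<rparr>"
    have M: "is_monad K M"
      using X S mult_cell unit mult_assoc mult_unit_left mult_unit_right
      unfolding M_def is_monad_def Let_def by simp
    have "mnd_to_rmd_obj K M = R"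
      using mnd_to_rmd_obj_eq[OF K M] monad_ext_eq X0 I unfolding M_def
      by (simp add: relmonad_data.equality)
    then show "R \<in> mnd_to_rmd_obj K ` Obj (Mnd K)" using M by (force simp: Mnd_def)
  qed
qed

lemma mnd_to_rmd_1_surj:
  assumes K: "two_category K" and x: "is_monad K x" and y: "is_monad K y"
    and g: "g \<in> hom (Rmd K) (mnd_to_rmd_obj K x) (mnd_to_rmd_obj K y)"
  shows "\<exists>f\<in>hom (Mnd K) x y. mnd_to_rmd_1 K f = g"
proof -
  interpret M1: monad_in K "mX x" "mS x" "mmul x" "munit x" using monad_in_monad_data[OF K x] .
  interpret M2: monad_in K "mX y" "mS y" "mmul y" "munit y" using monad_in_monad_data[OF K y] .
  have src: "rsrc g = mnd_to_rmd_obj K x" and tgt: "rtgt g = mnd_to_rmd_obj K y"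
    and "is_rmd_cell1 K g"
    using g by (auto simp: Rmd_def hom_def)
  then have F: "rF g \<in> hom K (mX x) (mX y)" and F0: "rF0 g \<in> hom K (mX x) (mX y)"
    and FI: "Comp1 K (rF g) (Id1 K (mX x)) = Comp1 K (Id1 K (mX y)) (rF0 g)"
    and \<phi>0: "rphi g \<in> cell K (Comp1 K (rF g) (mS x)) (Comp1 K (mS y) (rF0 g))"
    and unit_law: "VComp K (rphi g) (lwhisk K (rF g) (munit x)) = rwhisk K (munit y) (rF0 g)"
    and ext_law: "\<forall>Ob\<in>Obj K. \<forall>A\<in>hom K Ob (mX x). \<forall>B\<in>hom K Ob (mX x).
      \<forall>k\<in>cell K (Comp1 K (Id1 K (mX x)) A) (Comp1 K (mS x) B).
        VComp K (rwhisk K (rphi g) B) (lwhisk K (rF g) (M1.ext A B k)) =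
        VComp K (M2.ext (Comp1 K (rF0 g) A) (Comp1 K (rF0 g) B)
          (VComp K (rwhisk K (rphi g) B) (lwhisk K (rF g) k))) (rwhisk K (rphi g) A)"
    unfolding is_rmd_cell1_def Let_def mnd_to_rmd_obj_eq[OF K x] mnd_to_rmd_obj_eq[OF K y]
      relmonad_data.simps
    by auto
  have F0_eq: "rF0 g = rF g" using FI M1.comp1_idr[OF F] M1.comp1_idl[OF F0] by simp
  interpret monad_opfunctor_data K "mX x" "mS x" "mmul x" "munit x"
    "mX y" "mS y" "mmul y" "munit y" "rF g" "rphi g"
    by unfold_locales (use F \<phi>0 F0_eq in simp_all)
  have preserves_mult
    by (rule preserves_multI)
      (use ext_law[rule_format, OF M1.X M1.S M1.Id1_hom] F0_eq M1.Id2_S_cell in simp)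
  define f where "f = \<lparr>msrc = x, mtgt = y, mF = rF g, mphi = rphi g\<rparr>"
  have "is_mnd_cell1 K f"
    using x y F \<phi> unit_law F0_eq \<open>preserves_mult\<close>
    unfolding f_def is_mnd_cell1_def Let_def preserves_mult_def by simp
  moreover have "mnd_to_rmd_1 K f = g"
    unfolding f_def mnd_to_rmd_1_def using src tgt F0_eq by (simp add: rmd_cell1.equality)
  ultimately show ?thesis by (intro bexI[of _ f]) (simp_all add: hom_def Mnd_def f_def)
qed

lemma bij_betw_mnd_to_rmd_1:
  assumes K: "two_category K" and x: "x \<in> Obj (Mnd K)" and y: "y \<in> Obj (Mnd K)"
  shows "bij_betw (mnd_to_rmd_1 K) (hom (Mnd K) x y)
    (hom (Rmd K) (mnd_to_rmd_obj K x) (mnd_to_rmd_obj K y))"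
  unfolding bij_betw_def
proof (intro conjI equalityI subsetI)
  show "inj_on (mnd_to_rmd_1 K) (hom (Mnd K) x y)"
    by (rule inj_onI) (auto simp: hom_def Mnd_def mnd_to_rmd_1_def intro: mnd_cell1.equality)
  show "g \<in> hom (Rmd K) (mnd_to_rmd_obj K x) (mnd_to_rmd_obj K y)"
    if "g \<in> mnd_to_rmd_1 K ` hom (Mnd K) x y" for g
    using that is_rmd_cell1_mnd_to_rmd_1[OF K]
    by (auto simp: Mnd_def Rmd_def hom_def mnd_to_rmd_1_def)
  show "g \<in> mnd_to_rmd_1 K ` hom (Mnd K) x y"
    if "g \<in> hom (Rmd K) (mnd_to_rmd_obj K x) (mnd_to_rmd_obj K y)" for g
    using mnd_to_rmd_1_surj[OF K _ _ that] x y by (force simp: Mnd_def)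
qed

lemma mnd_to_rmd_2_surj:
  assumes K: "two_category K" and f: "f \<in> hom (Mnd K) x y" and g: "g \<in> hom (Mnd K) x y"
    and c: "c \<in> cell (Rmd K) (mnd_to_rmd_1 K f) (mnd_to_rmd_1 K g)"
  shows "\<exists>a\<in>cell (Mnd K) f g. mnd_to_rmd_2 K a = c"
proof -
  interpret two_category K by (rule K)
  have f1: "is_mnd_cell1 K f" and g1: "is_mnd_cell1 K g"
    and ends: "msrc f = x" "mtgt f = y" "msrc g = x" "mtgt g = y"
    using f g by (auto simp: hom_def Mnd_def)
  have x: "is_monad K x" and y: "is_monad K y" and F: "mF f \<in> hom K (mX x) (mX y)"
    using f1 ends unfolding is_mnd_cell1_def Let_def by auto
  have src: "r2src c = mnd_to_rmd_1 K f" and tgt: "r2tgt c = mnd_to_rmd_1 K g"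
    and "is_rmd_cell2 K c"
    using c by (auto simp: cell_def Rmd_def)
  then have p: "r2p c \<in> cell K (mF f) (mF g)" and p0: "r2p0 c \<in> cell K (mF f) (mF g)"
    and pI: "lwhisk K (Id1 K (mX y)) (r2p0 c) = rwhisk K (r2p c) (Id1 K (mX x))"
    and square: "VComp K (mphi g) (rwhisk K (r2p c) (mS x)) =
      VComp K (lwhisk K (mS y) (r2p0 c)) (mphi f)"
    using ends mnd_to_rmd_obj_eq[OF K x] mnd_to_rmd_obj_eq[OF K y]
    unfolding is_rmd_cell2_def Let_def by (simp_all add: mnd_to_rmd_1_def)
  have p0_eq: "r2p0 c = r2p c" using pI lwhisk_Id1[OF p0 F] rwhisk_Id1[OF p F] by simp
  define a where "a = \<lparr>m2src = f, m2tgt = g, m2p = r2p c\<rparr>"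
  have "is_mnd_cell2 K a"
    using f1 g1 ends p square p0_eq unfolding a_def is_mnd_cell2_def Let_def by simp
  moreover have "mnd_to_rmd_2 K a = c"
    unfolding a_def mnd_to_rmd_2_def using src tgt p0_eq by (simp add: rmd_cell2.equality)
  ultimately show ?thesis by (intro bexI[of _ a]) (simp_all add: cell_def Mnd_def a_def)
qed

lemma bij_betw_mnd_to_rmd_2:
  assumes K: "two_category K" and f: "f \<in> hom (Mnd K) x y" and g: "g \<in> hom (Mnd K) x y"
  shows "bij_betw (mnd_to_rmd_2 K) (cell (Mnd K) f g)
    (cell (Rmd K) (mnd_to_rmd_1 K f) (mnd_to_rmd_1 K g))"
  unfolding bij_betw_def
proof (intro conjI equalityI subsetI)
  show "inj_on (mnd_to_rmd_2 K) (cell (Mnd K) f g)"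
    by (rule inj_onI) (auto simp: cell_def Mnd_def mnd_to_rmd_2_def intro: mnd_cell2.equality)
  show "c \<in> cell (Rmd K) (mnd_to_rmd_1 K f) (mnd_to_rmd_1 K g)"
    if "c \<in> mnd_to_rmd_2 K ` cell (Mnd K) f g" for c
    using that is_rmd_cell2_mnd_to_rmd_2[OF K]
    by (auto simp: Mnd_def Rmd_def cell_def mnd_to_rmd_2_def)
  show "c \<in> mnd_to_rmd_2 K ` cell (Mnd K) f g"
    if "c \<in> cell (Rmd K) (mnd_to_rmd_1 K f) (mnd_to_rmd_1 K g)" for c
    using mnd_to_rmd_2_surj[OF K f g that] by blast
qed

theorem mainTheorem6:
  fixes K :: "('o,'a,'c) two_cat"
  assumes "two_category K"
  shows "two_functor (Mnd K) (Rmd K) (mnd_to_rmd_obj K) (mnd_to_rmd_1 K) (mnd_to_rmd_2 K)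
    \<and> inj_on (mnd_to_rmd_obj K) (Obj (Mnd K))
    \<and> mnd_to_rmd_obj K ` Obj (Mnd K) = {R \<in> Obj (Rmd K). rX0 R = rX R \<and> rI R = Id1 K (rX R)}
    \<and> locally_iso (Mnd K) (Rmd K) (mnd_to_rmd_obj K) (mnd_to_rmd_1 K) (mnd_to_rmd_2 K)"
  using two_functor_mnd_to_rmd[OF assms] inj_on_mnd_to_rmd_obj[OF assms]
    mnd_to_rmd_obj_image[OF assms] bij_betw_mnd_to_rmd_1[OF assms] bij_betw_mnd_to_rmd_2[OF assms]
  unfolding locally_iso_def by blast

end
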